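(* For every positive integer $r$, each column of the matrix $S_r$ has exactly $2^{r-1}$ entries equal to $1$, and each row of $S_r$ has exactly $2^r-1$ entries equal to $1$.
   Context: Define $\{0,1\}$-matrices $S_r$ recursively. Let $S_1=I_2$. For $r\ge1$ let $F_r=I_{2^r-1}\otimes\begin{pmatrix}0&1\\1&0\end{pmatrix}$, and let $1_r$, $0_r$ denote the $2^r\times1$ all-ones and all-zeros column vectors. For $r\ge2$ set $S_r=\big(B_r^{(i)}\ B_r^{(ii)}\ B_r^{(iii)}\big)$ (horizontal concatenation) with $$B_r^{(i)}=\begin{pmatrix}1_{r-1}&0_{r-1}\\0_{r-1}&1_{r-1}\end{pmatrix},\quad B_r^{(ii)}=\begin{pmatrix}S_{r-1}\\S_{r-1}\end{pmatrix},\quad B_r^{(iii)}=\begin{pmatrix}S_{r-1}\\S_{r-1}F_{r-1}\end{pmatrix}.$$ Then $S_r$ has $2^r$ rows and $c_r=2^{r+1}-2$ columns. *)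

theory Defs
  imports "Jordan_Normal_Form.Matrix"
begin

definition kron_I :: "nat \<Rightarrow> int mat \<Rightarrow> int mat" where
  "kron_I m A = mat (m * dim_row A) (m * dim_col A)
     (\<lambda>(i,j). if i div dim_row A = j div dim_col A
              then A $$ (i mod dim_row A, j mod dim_col A) else 0)"

definition swap2 :: "int mat" where
  "swap2 = mat 2 2 (\<lambda>(i,j). if i \<noteq> j then 1 else 0)"

definition Fm :: "nat \<Rightarrow> int mat" where
  "Fm r = kron_I (2^r - 1) swap2"

definition hcat :: "int mat \<Rightarrow> int mat \<Rightarrow> int mat" where
  "hcat A B = mat (dim_row A) (dim_col A + dim_col B)
     (\<lambda>(i,j). if j < dim_col A then A $$ (i,j) else B $$ (i, j - dim_col A))"

definition vcat :: "int mat \<Rightarrow> int mat \<Rightarrow> int mat" where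
  "vcat A B = mat (dim_row A + dim_row B) (dim_col A)
     (\<lambda>(i,j). if i < dim_row A then A $$ (i,j) else B $$ (i - dim_row A, j))"

definition ones_col :: "nat \<Rightarrow> int mat" where
  "ones_col r = mat (2^r) 1 (\<lambda>_. 1)"

definition zeros_col :: "nat \<Rightarrow> int mat" where
  "zeros_col r = mat (2^r) 1 (\<lambda>_. 0)"

text \<open>S_r for r >= 1 (S 0 is an irrelevant dummy value).\<close>
fun S :: "nat \<Rightarrow> int mat" where
  "S 0 = 1\<^sub>m 1"
| "S (Suc 0) = 1\<^sub>m 2"
| "S (Suc (Suc n)) =
     (let r' = Suc n;
          B1 = vcat (hcat (ones_col r') (zeros_col r')) (hcat (zeros_col r') (ones_col r'));
          B2 = vcat (S r') (S r');
          B3 = vcat (S r') (S r' * Fm r')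
      in hcat B1 (hcat B2 B3))"

end

theory Submission
  imports Defs
begin

text \<open>
  Count ones through the block decomposition \<open>S\<^sub>r\<^sub>+\<^sub>1 = (B\<^sup>(\<^sup>i\<^sup>) B\<^sup>(\<^sup>i\<^sup>i\<^sup>) B\<^sup>(\<^sup>i\<^sup>i\<^sup>i\<^sup>))\<close>, by induction on \<open>r\<close>.
  Right multiplication by \<open>F\<^sub>r\<close>, the permutation matrix of the involution swapping
  columns \<open>2k\<close> and \<open>2k + 1\<close>, merely permutes the columns of \<open>S\<^sub>r\<close>; so every column of
  \<open>B\<^sup>(\<^sup>i\<^sup>i\<^sup>)\<close> or \<open>B\<^sup>(\<^sup>i\<^sup>i\<^sup>i\<^sup>)\<close> stacks two columns of \<open>S\<^sub>r\<close> and has \<open>2 \<cdot> 2\<^sup>r\<^sup>-\<^sup>1\<close> ones, as do the two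
  columns of \<open>B\<^sup>(\<^sup>i\<^sup>)\<close>. Every row meets \<open>B\<^sup>(\<^sup>i\<^sup>)\<close> in a single one and each of the other two
  blocks in a (permuted) row of \<open>S\<^sub>r\<close>, giving \<open>1 + 2 (2\<^sup>r - 1) = 2\<^sup>r\<^sup>+\<^sup>1 - 1\<close> ones.
\<close>

lemma hcat_dims [simp]:
  "dim_row (hcat A B) = dim_row A" "dim_col (hcat A B) = dim_col A + dim_col B"
  by (simp_all add: hcat_def)

lemma vcat_dims [simp]:
  "dim_row (vcat A B) = dim_row A + dim_row B" "dim_col (vcat A B) = dim_col A"
  by (simp_all add: vcat_def)

definition col_count :: "int mat \<Rightarrow> nat \<Rightarrow> nat" where
  "col_count A j = card {i. i < dim_row A \<and> A $$ (i, j) = 1}"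

definition row_count :: "int mat \<Rightarrow> nat \<Rightarrow> nat" where
  "row_count A i = card {j. j < dim_col A \<and> A $$ (i, j) = 1}"

lemma card_less_add:
  fixes a b :: nat
  shows "card {i. i < a + b \<and> P i} = card {i. i < a \<and> P i} + card {i. i < b \<and> P (a + i)}"
proof -
  have "{i. i < a + b \<and> P i} = {i. i < a \<and> P i} \<union> (\<lambda>i. a + i) ` {i. i < b \<and> P (a + i)}"
    by (auto simp: image_iff) (metis add_diff_inverse_nat nat_add_left_cancel_less)
  also have "card \<dots> = card {i. i < a \<and> P i} + card ((\<lambda>i. a + i) ` {i. i < b \<and> P (a + i)})"
    by (rule card_Un_disjoint) auto
  finally show ?thesis
    by (simp add: card_image)
qed

lemma col_count_hcat:
  assumes "dim_row B = dim_row A" "j < dim_col A + dim_col B"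
  shows "col_count (hcat A B) j =
    (if j < dim_col A then col_count A j else col_count B (j - dim_col A))"
  using assms unfolding col_count_def hcat_def
  by (auto intro!: arg_cong[where f = card])

lemma row_count_hcat:
  assumes "i < dim_row A"
  shows "row_count (hcat A B) i = row_count A i + row_count B i"
  using assms unfolding row_count_def hcat_dims card_less_add
  by (auto intro!: arg_cong2[where f = "(+)"] arg_cong[where f = card] simp: hcat_def)

lemma col_count_vcat:
  assumes "j < dim_col A"
  shows "col_count (vcat A B) j = col_count A j + col_count B j"
  using assms unfolding col_count_def vcat_dims card_less_add
  by (auto intro!: arg_cong2[where f = "(+)"] arg_cong[where f = card] simp: vcat_def)

lemma row_count_vcat:
  assumes "dim_col B = dim_col A" "i < dim_row A + dim_row B"
  shows "row_count (vcat A B) i =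
    (if i < dim_row A then row_count A i else row_count B (i - dim_row A))"
  using assms unfolding row_count_def vcat_def
  by (auto intro!: arg_cong[where f = card])

lemma ones_col_dims [simp]: "dim_row (ones_col r) = 2 ^ r" "dim_col (ones_col r) = 1"
  by (simp_all add: ones_col_def)

lemma zeros_col_dims [simp]: "dim_row (zeros_col r) = 2 ^ r" "dim_col (zeros_col r) = 1"
  by (simp_all add: zeros_col_def)

lemma col_count_ones_col: "col_count (ones_col r) 0 = 2 ^ r"
  by (simp add: col_count_def ones_col_def cong: conj_cong)

lemma col_count_zeros_col: "col_count (zeros_col r) 0 = 0"
  by (simp add: col_count_def zeros_col_def cong: conj_cong)

lemma row_count_ones_col: "i < 2 ^ r \<Longrightarrow> row_count (ones_col r) i = 1"
  by (simp add: row_count_def ones_col_def cong: conj_cong)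

lemma row_count_zeros_col: "i < 2 ^ r \<Longrightarrow> row_count (zeros_col r) i = 0"
  by (simp add: row_count_def zeros_col_def cong: conj_cong)

definition perm_mat_of :: "int mat \<Rightarrow> (nat \<Rightarrow> nat) \<Rightarrow> nat \<Rightarrow> bool" where
  "perm_mat_of P \<sigma> n \<longleftrightarrow> P \<in> carrier_mat n n \<and> bij_betw \<sigma> {..<n} {..<n} \<and>
     (\<forall>k<n. \<forall>j<n. P $$ (k, j) = (if k = \<sigma> j then 1 else 0))"

lemma perm_mat_ofD:
  assumes "perm_mat_of P \<sigma> n"
  shows "dim_row P = n" "dim_col P = n" "bij_betw \<sigma> {..<n} {..<n}"
  using assms unfolding perm_mat_of_def by auto

lemma index_mult_perm_mat:
  assumes P: "perm_mat_of P \<sigma> (dim_col A)" and "i < dim_row A" "j < dim_col A"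
  shows "(A * P) $$ (i, j) = A $$ (i, \<sigma> j)"
proof -
  have "\<sigma> j < dim_col A"
    using perm_mat_ofD(3)[OF P] \<open>j < dim_col A\<close> by (auto simp: bij_betw_def)
  have "(A * P) $$ (i, j) = (\<Sum>k<dim_col A. A $$ (i, k) * P $$ (k, j))"
    using P assms by (auto simp: perm_mat_of_def scalar_prod_def atLeast0LessThan)
  also have "\<dots> = (\<Sum>k<dim_col A. if k = \<sigma> j then A $$ (i, k) else 0)"
    using P \<open>j < dim_col A\<close> by (intro sum.cong) (auto simp: perm_mat_of_def)
  also have "\<dots> = A $$ (i, \<sigma> j)"
    using \<open>\<sigma> j < dim_col A\<close> by simp
  finally show ?thesis .
qed

lemma col_count_mult_perm_mat:
  assumes "perm_mat_of P \<sigma> (dim_col A)" "j < dim_col A"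
  shows "col_count (A * P) j = col_count A (\<sigma> j)"
proof -
  have "{i. i < dim_row (A * P) \<and> (A * P) $$ (i, j) = 1} = {i. i < dim_row A \<and> A $$ (i, \<sigma> j) = 1}"
    using assms index_mult_perm_mat by fastforce
  then show ?thesis
    by (simp add: col_count_def)
qed

lemma row_count_mult_perm_mat:
  assumes P: "perm_mat_of P \<sigma> (dim_col A)" and i: "i < dim_row A"
  shows "row_count (A * P) i = row_count A i"
proof -
  have "{j. j < dim_col (A * P) \<and> (A * P) $$ (i, j) = 1} = {j \<in> {..<dim_col A}. A $$ (i, \<sigma> j) = 1}"
    using perm_mat_ofD(2)[OF P] by (auto simp: index_mult_perm_mat[OF P i])
  also have "card \<dots> = card {j \<in> {..<dim_col A}. A $$ (i, j) = 1}"
    by (rule bij_betw_same_card, rule bij_betw_Collect[OF perm_mat_ofD(3)[OF P]]) (rule refl)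
  finally show ?thesis
    by (simp add: row_count_def)
qed

definition pair_swap :: "nat \<Rightarrow> nat" where
  "pair_swap j = (if even j then Suc j else j - 1)"

lemma pair_swap_iff: "k = pair_swap j \<longleftrightarrow> k div 2 = j div 2 \<and> k mod 2 \<noteq> j mod 2"
proof (cases "even j")
  case True
  then obtain a where "j = 2 * a" ..
  then show ?thesis
    unfolding pair_swap_def by simp presburger
next
  case False
  then obtain a where "j = 2 * a + 1" by (rule oddE)
  then show ?thesis
    unfolding pair_swap_def by simp presburger
qed

lemma pair_swap_less: "j < 2 * m \<Longrightarrow> pair_swap j < 2 * m"
  unfolding pair_swap_def by presburger

lemma pair_swap_pair_swap [simp]: "pair_swap (pair_swap j) = j"
  unfolding pair_swap_def by presburger

lemma bij_betw_pair_swap: "bij_betw pair_swap {..<2 * m} {..<2 * m}"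
  by (rule bij_betw_byWitness[where f' = pair_swap]) (auto simp: pair_swap_less)

lemma perm_mat_of_Fm: "perm_mat_of (Fm m) pair_swap (2 * (2 ^ m - 1))"
proof -
  have "Fm m $$ (k, j) = (if k = pair_swap j then 1 else 0)"
    if "k < 2 * (2 ^ m - 1)" "j < 2 * (2 ^ m - 1)" for k j
    using that unfolding Fm_def kron_I_def pair_swap_iff
    by (simp add: swap2_def mult.commute)
  then show ?thesis
    unfolding perm_mat_of_def
    by (simp add: Fm_def kron_I_def swap2_def bij_betw_pair_swap mult.commute)
qed

definition indicator_block :: "nat \<Rightarrow> int mat" where
  "indicator_block r = vcat (hcat (ones_col r) (zeros_col r)) (hcat (zeros_col r) (ones_col r))"

lemma indicator_block_dims [simp]:
  "dim_row (indicator_block r) = 2 ^ r + 2 ^ r" "dim_col (indicator_block r) = 2"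
  by (simp_all add: indicator_block_def)

lemma col_count_indicator_block: "k < 2 \<Longrightarrow> col_count (indicator_block r) k = 2 ^ r"
  by (auto simp: indicator_block_def less_2_cases_iff col_count_vcat col_count_hcat
      col_count_ones_col col_count_zeros_col)

lemma row_count_indicator_block: "i < 2 ^ r + 2 ^ r \<Longrightarrow> row_count (indicator_block r) i = 1"
  by (simp add: indicator_block_def row_count_vcat row_count_hcat
      row_count_ones_col row_count_zeros_col)

lemma S_Suc_Suc:
  "S (Suc (Suc n)) = hcat (indicator_block (Suc n))
     (hcat (vcat (S (Suc n)) (S (Suc n))) (vcat (S (Suc n)) (S (Suc n) * Fm (Suc n))))"
  by (simp add: indicator_block_def Let_def)

lemma dim_S:
  "dim_row (S (Suc n)) = 2 ^ Suc n" "dim_col (S (Suc n)) = 2 * (2 ^ Suc n - 1)"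
proof (induction n)
  case (Suc n)
  have "dim_col (Fm (Suc n)) = 2 * (2 ^ Suc n - 1)"
    using perm_mat_ofD(2)[OF perm_mat_of_Fm] .
  moreover have "2 + 4 * (2 ^ Suc n - 1) = 2 * (2 ^ Suc (Suc n) - 1 :: nat)"
    using one_le_power[of "2::nat" n] by (simp only: power_Suc) linarith
  ultimately show "dim_row (S (Suc (Suc n))) = 2 ^ Suc (Suc n)"
    "dim_col (S (Suc (Suc n))) = 2 * (2 ^ Suc (Suc n) - 1)"
    using Suc.IH by (simp_all add: S_Suc_Suc)
qed simp_all

lemma perm_mat_of_Fm_S: "perm_mat_of (Fm (Suc n)) pair_swap (dim_col (S (Suc n)))"
  unfolding dim_S by (rule perm_mat_of_Fm)

lemma col_count_S: "j < dim_col (S (Suc n)) \<Longrightarrow> col_count (S (Suc n)) j = 2 ^ n"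
proof (induction n arbitrary: j)
  case 0
  then show ?case
    by (auto simp: col_count_def less_2_cases_iff cong: conj_cong)
next
  case (Suc n)
  define A where "A = S (Suc n)"
  have perm: "perm_mat_of (Fm (Suc n)) pair_swap (dim_col A)"
    unfolding A_def by (rule perm_mat_of_Fm_S)
  have col_stack: "col_count (vcat A A) k = 2 ^ Suc n" if "k < dim_col A" for k
    using that Suc.IH by (simp add: A_def col_count_vcat)
  have col_stack_swapped: "col_count (vcat A (A * Fm (Suc n))) k = 2 ^ Suc n" if "k < dim_col A" for k
  proof -
    have "pair_swap k < dim_col A"
      using that by (simp add: A_def dim_S pair_swap_less)
    then show ?thesis
      using that Suc.IH perm by (simp add: A_def col_count_vcat col_count_mult_perm_mat)
  qed
  show ?case
    using Suc.prems col_stack col_stack_swapped[of "j - 2 - dim_col A"]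
      perm_mat_ofD(2)[OF perm] dim_S(1)[of n]
    unfolding S_Suc_Suc A_def[symmetric]
    by (auto simp: col_count_hcat col_count_indicator_block)
qed

lemma row_count_S: "i < dim_row (S (Suc n)) \<Longrightarrow> row_count (S (Suc n)) i = 2 ^ Suc n - 1"
proof (induction n arbitrary: i)
  case 0
  then show ?case
    by (auto simp: row_count_def less_2_cases_iff cong: conj_cong)
next
  case (Suc n)
  define A where "A = S (Suc n)"
  have perm: "perm_mat_of (Fm (Suc n)) pair_swap (dim_col A)"
    unfolding A_def by (rule perm_mat_of_Fm_S)
  have i: "i < 2 ^ Suc n + 2 ^ Suc n" "i < dim_row A + dim_row A"
    using Suc.prems by (simp_all add: A_def dim_S)
  have row_stack: "row_count (vcat A A) i = 2 ^ Suc n - 1"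
    using i Suc.IH by (simp add: A_def row_count_vcat)
  have row_stack_swapped: "row_count (vcat A (A * Fm (Suc n))) i = 2 ^ Suc n - 1"
    using i Suc.IH perm perm_mat_ofD(2)[OF perm]
    by (simp add: A_def row_count_vcat row_count_mult_perm_mat)
  have "row_count (S (Suc (Suc n))) i =
      row_count (indicator_block (Suc n)) i + (row_count (vcat A A) i + row_count (vcat A (A * Fm (Suc n))) i)"
    using i by (simp only: S_Suc_Suc A_def[symmetric] row_count_hcat indicator_block_dims vcat_dims)
  also have "\<dots> = 1 + (2 ^ Suc n - 1) + (2 ^ Suc n - 1)"
    using i row_stack row_stack_swapped by (simp add: row_count_indicator_block)
  also have "\<dots> = 2 ^ Suc (Suc n) - 1"
    using one_le_power[of "2::nat" n] by simp
  finally show ?case .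
qed

theorem lemma4p2:
  fixes r :: nat
  assumes "r \<ge> 1"
  shows "(\<forall>j < dim_col (S r). card {i. i < dim_row (S r) \<and> S r $$ (i, j) = 1} = 2^(r-1))
       \<and> (\<forall>i < dim_row (S r). card {j. j < dim_col (S r) \<and> S r $$ (i, j) = 1} = 2^r - 1)"
proof -
  obtain n where r: "r = Suc n"
    using assms by (cases r) auto
  show ?thesis
    using col_count_S[of _ n] row_count_S[of _ n]
    unfolding r col_count_def row_count_def by simp
qed

end
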